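(* Let $a_0,\dots,a_4,b_0,\dots,b_4>0$. Assume $Q<0$, $z_0>0$ (so that $\xi^{ext}_1,\dots,\xi^{ext}_4$ are real) and $\xi_{min}>0$. If $P_5(\xi_{min})>0$ and $P_5(\xi_{max})<0$, then the quartic operator $\mathcal{Q}$ has at least three fixed points in $\mathbb{R}_>^2$, i.e. $N_>^{fix}(\mathcal{Q})\ge 3$.
   Context: Quartic operator on $\mathbb{R}_+^2=\{(x,y):x\ge0,y\ge0\}$: $\mathcal{Q}(x,y)=\big(\sum_{i=0}^4\binom{4}{i}a_i x^{4-i}y^i,\ \sum_{i=0}^4\binom{4}{i}b_i x^{4-i}y^i\big)$; $\mathbb{R}_>^2=\{(x,y):x>0,y>0\}$; $N_>^{fix}(\mathcal{Q})$ is the number of fixed points of $\mathcal{Q}$ in $\mathbb{R}_>^2$. Set $\mu_0=a_4$, $\mu_1=4a_3-b_4$, $\mu_2=6a_2-4b_3$, $\mu_3=4a_1-6b_2$, $\mu_4=a_0-4b_1$, $\mu_5=b_0$, and $P_5(\xi)=\mu_0\xi^5+\mu_1\xi^4+\mu_2\xi^3+\mu_3\xi^2+\mu_4\xi-\mu_5$. Define $p=\frac{15\mu_0\mu_2-6\mu_1^2}{25\mu_0^2}$, $q=\frac{50\mu_0^2\mu_3+8\mu_1^3-30\mu_0\mu_1\mu_2}{125\mu_0^3}$, $r=\frac{15\mu_0\mu_1^2\mu_2-50\mu_0^2\mu_1\mu_3-3\mu_1^4+125\mu_0^3\mu_4}{625\mu_0^4}$ (so that $\omega^4+p\omega^2+q\omega+r=P_5'(\omega-\frac{\mu_1}{5\mu_0})/(5\mu_0)$),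 $a=-\frac{p^2}{12}-r$, $b=-\frac{p^3}{108}+\frac{pr}{3}-\frac{q^2}{8}$, $Q=(a/3)^3+(b/2)^2$. When $Q<0$ (hence $a<0$), let $\alpha\in[0,\pi]$ with $\cos\alpha=-\frac{b}{2}\left(-\frac{3}{a}\right)^{3/2}$ and $z_0=2\sqrt{-a/3}\,\cos\!\left(\frac{2\pi}{3}+\frac{\alpha}{3}\right)-\frac{p}{3}$. For $z_0>0$ put $\xi^{ext}_{1,2}=\frac12\Big(\sqrt{2z_0}\pm\sqrt{2z_0-4\big(\frac p2+z_0+\frac{q}{2\sqrt{2z_0}}\big)}\Big)-\frac{\mu_1}{5\mu_0}$, $\xi^{ext}_{3,4}=\frac12\Big(-\sqrt{2z_0}\pm\sqrt{2z_0-4\big(\frac p2+z_0-\frac{q}{2\sqrt{2z_0}}\big)}\Big)-\frac{\mu_1}{5\mu_0}$, and $\xi_{min}=\min_j\xi^{ext}_j$, $\xi_{max}=\max_j\xi^{ext}_j$. *)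

theory Defs
  imports Complex_Main "HOL-Library.Extended_Nat"
begin

text \<open>Coefficients a_0..a_4 and b_0..b_4 are given as functions nat => real (only indices 0..4 matter).\<close>

definition quartic_op :: "(nat \<Rightarrow> real) \<Rightarrow> (nat \<Rightarrow> real) \<Rightarrow> real \<times> real \<Rightarrow> real \<times> real" where
  "quartic_op a b = (\<lambda>(x, y).
     ((\<Sum>i\<le>4. real (4 choose i) * a i * x ^ (4 - i) * y ^ i),
      (\<Sum>i\<le>4. real (4 choose i) * b i * x ^ (4 - i) * y ^ i)))"

definition fixed_points_pos :: "(nat \<Rightarrow> real) \<Rightarrow> (nat \<Rightarrow> real) \<Rightarrow> (real \<times> real) set" where
  "fixed_points_pos a b = {(x, y). x > 0 \<and> y > 0 \<and> quartic_op a b (x, y) = (x, y)}"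

definition N_fix_pos :: "(nat \<Rightarrow> real) \<Rightarrow> (nat \<Rightarrow> real) \<Rightarrow> enat" where
  "N_fix_pos a b = (if finite (fixed_points_pos a b) then enat (card (fixed_points_pos a b)) else \<infinity>)"

definition mu :: "(nat \<Rightarrow> real) \<Rightarrow> (nat \<Rightarrow> real) \<Rightarrow> nat \<Rightarrow> real" where
  "mu a b k = (if k = 0 then a 4
     else if k = 1 then 4 * a 3 - b 4
     else if k = 2 then 6 * a 2 - 4 * b 3
     else if k = 3 then 4 * a 1 - 6 * b 2
     else if k = 4 then a 0 - 4 * b 1
     else b 0)"

definition P5 :: "(nat \<Rightarrow> real) \<Rightarrow> (nat \<Rightarrow> real) \<Rightarrow> real \<Rightarrow> real" where
  "P5 a b \<xi> = mu a b 0 * \<xi> ^ 5 + mu a b 1 * \<xi> ^ 4 + mu a b 2 * \<xi> ^ 3 + mu a b 3 * \<xi> ^ 2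
     + mu a b 4 * \<xi> - mu a b 5"

definition pp :: "(nat \<Rightarrow> real) \<Rightarrow> (nat \<Rightarrow> real) \<Rightarrow> real" where
  "pp a b = (let m = mu a b in (15 * m 0 * m 2 - 6 * (m 1)^2) / (25 * (m 0)^2))"

definition qq :: "(nat \<Rightarrow> real) \<Rightarrow> (nat \<Rightarrow> real) \<Rightarrow> real" where
  "qq a b = (let m = mu a b in
     (50 * (m 0)^2 * m 3 + 8 * (m 1)^3 - 30 * m 0 * m 1 * m 2) / (125 * (m 0)^3))"

definition rr :: "(nat \<Rightarrow> real) \<Rightarrow> (nat \<Rightarrow> real) \<Rightarrow> real" where
  "rr a b = (let m = mu a b in
     (15 * m 0 * (m 1)^2 * m 2 - 50 * (m 0)^2 * m 1 * m 3 - 3 * (m 1)^4 + 125 * (m 0)^3 * m 4)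
       / (625 * (m 0)^4))"

definition aa :: "(nat \<Rightarrow> real) \<Rightarrow> (nat \<Rightarrow> real) \<Rightarrow> real" where
  "aa a b = - ((pp a b) ^ 2 / 12) - rr a b"

definition bb :: "(nat \<Rightarrow> real) \<Rightarrow> (nat \<Rightarrow> real) \<Rightarrow> real" where
  "bb a b = - ((pp a b) ^ 3 / 108) + pp a b * rr a b / 3 - (qq a b) ^ 2 / 8"

definition QQ :: "(nat \<Rightarrow> real) \<Rightarrow> (nat \<Rightarrow> real) \<Rightarrow> real" where
  "QQ a b = (aa a b / 3)^3 + (bb a b / 2)^2"

definition alpha :: "(nat \<Rightarrow> real) \<Rightarrow> (nat \<Rightarrow> real) \<Rightarrow> real" where
  "alpha a b = arccos (- (bb a b / 2) * (sqrt (- 3 / aa a b))^3)"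

definition z0 :: "(nat \<Rightarrow> real) \<Rightarrow> (nat \<Rightarrow> real) \<Rightarrow> real" where
  "z0 a b = 2 * sqrt (- aa a b / 3) * cos (2 * pi / 3 + alpha a b / 3) - pp a b / 3"

definition xi_ext :: "(nat \<Rightarrow> real) \<Rightarrow> (nat \<Rightarrow> real) \<Rightarrow> nat \<Rightarrow> real" where
  "xi_ext a b j = (let z = z0 a b; p = pp a b; q = qq a b; s = sqrt (2 * z);
      sh = mu a b 1 / (5 * mu a b 0) in
     if j = 1 then (s + sqrt (2 * z - 4 * (p / 2 + z + q / (2 * s)))) / 2 - sh
     else if j = 2 then (s - sqrt (2 * z - 4 * (p / 2 + z + q / (2 * s)))) / 2 - sh
     else if j = 3 then (- s + sqrt (2 * z - 4 * (p / 2 + z - q / (2 * s)))) / 2 - sh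
     else (- s - sqrt (2 * z - 4 * (p / 2 + z - q / (2 * s)))) / 2 - sh)"

definition xi_min :: "(nat \<Rightarrow> real) \<Rightarrow> (nat \<Rightarrow> real) \<Rightarrow> real" where
  "xi_min a b = Min (xi_ext a b ` {1..4})"

definition xi_max :: "(nat \<Rightarrow> real) \<Rightarrow> (nat \<Rightarrow> real) \<Rightarrow> real" where
  "xi_max a b = Max (xi_ext a b ` {1..4})"

end

theory Submission
  imports Defs
begin

text \<open>Along the ray \<open>y = \<xi> x\<close> the operator is homogeneous of degree four, so \<open>(x, \<xi> x)\<close> with
  \<open>x, \<xi> > 0\<close> is a fixed point iff \<open>x\<^sup>3 A(\<xi>) = 1\<close> and \<open>B(\<xi>) = \<xi> A(\<xi>)\<close>, where \<open>A, B\<close> are the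
  two quartic forms at \<open>(1, \<xi>)\<close>. The second condition is \<open>P\<^sub>5(\<xi>) = 0\<close> and the first fixes \<open>x\<close>,
  so distinct positive roots of \<open>P\<^sub>5\<close> give distinct fixed points. Since \<open>P\<^sub>5(0) = -b\<^sub>0 < 0\<close> and
  \<open>P\<^sub>5(\<xi>) \<rightarrow> \<infinity>\<close>, the assumed signs at \<open>\<xi>\<^sub>m\<^sub>i\<^sub>n\<close> and \<open>\<xi>\<^sub>m\<^sub>a\<^sub>x\<close> give a root in each of
  \<open>(0, \<xi>\<^sub>m\<^sub>i\<^sub>n)\<close>, \<open>(\<xi>\<^sub>m\<^sub>i\<^sub>n, \<xi>\<^sub>m\<^sub>a\<^sub>x)\<close> and \<open>(\<xi>\<^sub>m\<^sub>a\<^sub>x, \<infinity>)\<close>.\<close>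

lemma IVT_strict_sign_change:
  fixes f :: "real \<Rightarrow> real"
  assumes "continuous_on {l..u} f" and "l \<le> u" and "f l * f u < 0"
  obtains r where "l < r" and "r < u" and "f r = 0"
proof -
  from assms(3) have "f l \<le> 0 \<and> 0 \<le> f u \<or> f u \<le> 0 \<and> 0 \<le> f l"
    by (auto simp: mult_less_0_iff)
  then obtain r where "l \<le> r" "r \<le> u" "f r = 0"
    using IVT'[of f l 0 u] IVT2'[of f u 0 l] assms(1,2) by blast
  moreover have "r \<noteq> l" "r \<noteq> u" using \<open>f r = 0\<close> assms(3) by auto
  ultimately show ?thesis by (intro that) auto
qed

definition dehom_quartic :: "(nat \<Rightarrow> real) \<Rightarrow> real \<Rightarrow> real" where
  "dehom_quartic c \<xi> = (\<Sum>i\<le>4. real (4 choose i) * c i * \<xi> ^ i)"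

lemma quartic_op_on_ray:
  "quartic_op a b (x, \<xi> * x) = (x ^ 4 * dehom_quartic a \<xi>, x ^ 4 * dehom_quartic b \<xi>)"
proof -
  have "(\<Sum>i\<le>4. real (4 choose i) * c i * x ^ (4 - i) * (\<xi> * x) ^ i) = x ^ 4 * dehom_quartic c \<xi>"
    for c
    unfolding dehom_quartic_def sum_distrib_left
  proof (rule sum.cong)
    fix i assume "i \<in> {..4::nat}"
    then have "x ^ (4 - i) * x ^ i = x ^ 4" by (simp flip: power_add)
    then show "real (4 choose i) * c i * x ^ (4 - i) * (\<xi> * x) ^ i
             = x ^ 4 * (real (4 choose i) * c i * \<xi> ^ i)"
      by (simp add: power_mult_distrib mult_ac)
  qed simp
  then show ?thesis unfolding quartic_op_def by simp
qed

lemma P5_eq_dehom_quartic: "P5 a b \<xi> = \<xi> * dehom_quartic a \<xi> - dehom_quartic b \<xi>"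
  by (simp add: P5_def mu_def dehom_quartic_def numeral_eq_Suc algebra_simps)

lemma dehom_quartic_pos:
  assumes "\<forall>i\<le>4. c i > 0" and "\<xi> > 0"
  shows "dehom_quartic c \<xi> > 0"
  unfolding dehom_quartic_def using assms by (intro sum_pos) auto

lemma filterlim_P5_at_top:
  assumes "mu a b 0 > 0"
  shows "filterlim (P5 a b) at_top at_top"
proof -
  let ?m = "mu a b"
  let ?lower = "\<lambda>\<xi>. ?m 0 + ?m 1 / \<xi> + ?m 2 / \<xi>^2 + ?m 3 / \<xi>^3 + ?m 4 / \<xi>^4 - ?m 5 / \<xi>^5"
  have "(?lower \<longlongrightarrow> ?m 0 + 0 + 0 + 0 + 0 - 0) at_top"
    by (intro tendsto_intros tendsto_divide_0[OF tendsto_const] filterlim_pow_at_top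
          filterlim_ident filterlim_at_top_imp_at_infinity) auto
  then have "filterlim (\<lambda>\<xi>. ?lower \<xi> * \<xi> ^ 5) at_top at_top"
    using assms by (intro filterlim_tendsto_pos_mult_at_top filterlim_pow_at_top filterlim_ident) auto
  moreover have ev: "\<forall>\<^sub>F \<xi> in at_top. ?lower \<xi> * \<xi> ^ 5 = P5 a b \<xi>"
    using eventually_gt_at_top[of 0]
    by eventually_elim (simp add: P5_def field_simps eval_nat_numeral)
  ultimately show ?thesis using filterlim_cong[OF refl refl ev] by simp
qed

lemma fixed_point_on_ray:
  assumes a_pos: "\<forall>i\<le>4. a i > 0" and "\<xi> > 0" and root: "P5 a b \<xi> = 0"
  obtains x where "x > 0" and "(x, \<xi> * x) \<in> fixed_points_pos a b"
proof
  let ?A = "dehom_quartic a \<xi>"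
  have A_pos: "?A > 0" using dehom_quartic_pos[OF a_pos \<open>\<xi> > 0\<close>] .
  define x where "x = root 3 (1 / ?A)"
  show x_pos: "x > 0" using A_pos unfolding x_def by simp
  have "x ^ 3 * ?A = 1" using A_pos unfolding x_def by simp
  then have "x ^ 4 * ?A = x" by (simp add: eval_nat_numeral mult_ac)
  moreover have "dehom_quartic b \<xi> = \<xi> * ?A" using root by (simp add: P5_eq_dehom_quartic)
  ultimately have "quartic_op a b (x, \<xi> * x) = (x, \<xi> * x)"
    by (simp add: quartic_op_on_ray mult.left_commute)
  then show "(x, \<xi> * x) \<in> fixed_points_pos a b"
    using x_pos \<open>\<xi> > 0\<close> unfolding fixed_points_pos_def by simp
qed

lemma card_pos_roots_le_N_fix_pos:
  assumes a_pos: "\<forall>i\<le>4. a i > 0" and "finite R"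
    and roots: "\<forall>\<xi>\<in>R. \<xi> > 0 \<and> P5 a b \<xi> = 0"
  shows "enat (card R) \<le> N_fix_pos a b"
proof -
  have "\<forall>\<xi>\<in>R. \<exists>x. x > 0 \<and> (x, \<xi> * x) \<in> fixed_points_pos a b"
    using fixed_point_on_ray[OF a_pos] roots by metis
  then obtain x where x: "\<And>\<xi>. \<xi> \<in> R \<Longrightarrow> x \<xi> > 0 \<and> (x \<xi>, \<xi> * x \<xi>) \<in> fixed_points_pos a b"
    by metis
  let ?pt = "\<lambda>\<xi>. (x \<xi>, \<xi> * x \<xi>)"
  have "inj_on ?pt R"
  proof (rule inj_onI)
    fix \<xi> \<eta> assume "\<xi> \<in> R" and "?pt \<xi> = ?pt \<eta>"
    then have "\<xi> * x \<xi> = \<eta> * x \<xi>" by (metis prod.inject)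
    moreover have "x \<xi> > 0" using x \<open>\<xi> \<in> R\<close> by blast
    ultimately show "\<xi> = \<eta>" by simp
  qed
  then have "card R = card (?pt ` R)" by (simp add: card_image)
  moreover have "?pt ` R \<subseteq> fixed_points_pos a b" using x by auto
  ultimately show ?thesis
    unfolding N_fix_pos_def using card_mono by auto
qed

theorem theorem3:
  fixes a b :: "nat \<Rightarrow> real"
  assumes "\<forall>i\<le>4. a i > 0" and "\<forall>i\<le>4. b i > 0"
    and "QQ a b < 0" and "z0 a b > 0" and "xi_min a b > 0"
    and "P5 a b (xi_min a b) > 0" and "P5 a b (xi_max a b) < 0"
  shows "N_fix_pos a b \<ge> 3"
proof -
  let ?P = "P5 a b" and ?m = "xi_min a b" and ?M = "xi_max a b"
  have cont: "continuous_on S ?P" for S unfolding P5_def by (intro continuous_intros)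
  have "?P 0 < 0" using assms(2) by (simp add: P5_def mu_def)
  then obtain r1 where r1: "0 < r1" "r1 < ?m" "?P r1 = 0"
    using IVT_strict_sign_change[OF cont, of 0 ?m] assms(5,6) by (auto simp: mult_neg_pos)
  have "?m \<le> ?M" unfolding xi_min_def xi_max_def
    by (rule order_trans[OF Min_le Max_ge[of _ "xi_ext a b 1"]]) auto
  then obtain r2 where r2: "?m < r2" "r2 < ?M" "?P r2 = 0"
    using IVT_strict_sign_change[OF cont, of ?m ?M] assms(6,7) by (auto simp: mult_pos_neg)
  have "mu a b 0 > 0" using assms(1) by (simp add: mu_def)
  then have "\<forall>\<^sub>F K in at_top. ?P K > 0"
    using filterlim_P5_at_top by (simp add: filterlim_at_top_dense)
  then have "\<forall>\<^sub>F K in at_top. K \<ge> ?M \<and> ?P K > 0"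
    by (intro eventually_conj eventually_ge_at_top)
  then obtain K where "K \<ge> ?M" "?P K > 0"
    unfolding eventually_at_top_linorder by blast
  then obtain r3 where r3: "?M < r3" "?P r3 = 0"
    using IVT_strict_sign_change[OF cont, of ?M K] assms(7) by (auto simp: mult_neg_pos)
  have "enat (card {r1, r2, r3}) \<le> N_fix_pos a b"
    using card_pos_roots_le_N_fix_pos[OF assms(1), of "{r1, r2, r3}"] r1 r2 r3 assms(5) by auto
  moreover have "card {r1, r2, r3} = 3" using r1 r2 r3 by auto
  ultimately show ?thesis by (simp add: numeral_eq_enat)
qed

end
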